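(* Fix an integer $M\ge2$ and constants $T_s,L_{s,d},L_{s,r},L_{r,d}>0$, $\delta\in(0,1]$, $\alpha\in(0,1)$. Put $g_{s,d}=\sin^2(\pi/M)T_sL_{s,d}$, $g_{r,d}=\sin^2(\pi/M)T_sL_{s,r}L_{r,d}$. For $\bar\gamma>0$ set $\bar\gamma_{s,r}=\bar\gamma_{s,d}=\bar\gamma_{r,d}=P_s/N_0=\bar\gamma$, $\bar\gamma^{ID}_{s,r}=T_sL_{s,r}\bar\gamma$, $$\epsilon=\frac{1}{2(1+\bar\gamma^{ID}_{s,r})}\ (M=2),\qquad \epsilon=1.03\sqrt{\tfrac{1+\cos\frac{\pi}{M}}{2\cos\frac{\pi}{M}}}\Big[1-\sqrt{\tfrac{(1-\cos\frac{\pi}{M})\bar\gamma^{ID}_{s,r}}{1+(1-\cos\frac{\pi}{M})\bar\gamma^{ID}_{s,r}}}\Big]\ (M>2),$$ and $\eta=\ln\frac{(1-\epsilon)(M-1)}{\epsilon}$. Define $$a_1=\frac{\sqrt\pi\,(2g_{s,d})^{-1/4}}{4\bar\gamma}\Big(\frac{g_{s,d}}2+\bar\gamma^{-1}\Big)^{-3/4},\quad b_1=\frac14+\frac{\sqrt{g_{s,d}/2+\bar\gamma^{-1}}}{2\sqrt{2g_{s,d}}},$$ $$a_2=\frac{2\bar\gamma}{\delta g_{r,d}(g_{s,d}\bar\gamma+2)\bar\gamma^2},\quad b_2=\frac{\delta g_{r,d}\bar\gamma^2}{2\bar\gamma},$$ $$Z_1=a_1\sqrt{2\eta}\,e^{-2b_1\eta},\quad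 Z_2=\frac{a_2(1-\alpha)}{2\alpha}\ln\Big(1+b_2\frac{2\alpha}{1-\alpha}\Big),\quad Z_3=e^{\eta}Z_1,$$ $$\mathcal P_C=(1-\epsilon)(Z_1+Z_2),\qquad \mathcal P_E=\frac{\epsilon Z_3}{M-1}+\frac{\epsilon}{g_{s,d}\bar\gamma+2}.$$ Then $$\lim_{\bar\gamma\to\infty}\frac{\ln(\mathcal P_C+\mathcal P_E)}{\ln\bar\gamma}=-2,$$ i.e. the diversity order is two.
   Context: $\mathcal P_C+\mathcal P_E$ is the paper's closed-form approximate average symbol error rate of its proposed detector in a three-node SWIPT-enabled differential decode-and-forward relay network with $M$-DPSK where the relay uses time switching with ratio $\alpha$ (relay transmit power $2\delta P_sL_{s,r}|h_{s,r}|^2\alpha/(1-\alpha)$), under Rayleigh fading with all average SNRs equal to $\bar\gamma$ and unit-mean channel gains. *)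

theory Defs
  imports Complex_Main
begin

text \<open>Closed-form approximate SER of the proposed detector; all quantities are
  functions of the parameters and of the common average SNR g (= gamma bar).\<close>

definition gsd :: "nat \<Rightarrow> real \<Rightarrow> real \<Rightarrow> real" where
  "gsd M Ts Lsd = (sin (pi / real M))^2 * Ts * Lsd"

definition grd :: "nat \<Rightarrow> real \<Rightarrow> real \<Rightarrow> real \<Rightarrow> real" where
  "grd M Ts Lsr Lrd = (sin (pi / real M))^2 * Ts * Lsr * Lrd"

definition gID :: "real \<Rightarrow> real \<Rightarrow> real \<Rightarrow> real" where
  "gID Ts Lsr g = Ts * Lsr * g"

definition eps :: "nat \<Rightarrow> real \<Rightarrow> real \<Rightarrow> real \<Rightarrow> real" where
  "eps M Ts Lsr g =
     (if M = 2 then 1 / (2 * (1 + gID Ts Lsr g))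
      else 1.03 * sqrt ((1 + cos (pi / real M)) / (2 * cos (pi / real M))) *
        (1 - sqrt ((1 - cos (pi / real M)) * gID Ts Lsr g /
                   (1 + (1 - cos (pi / real M)) * gID Ts Lsr g))))"

definition eta :: "nat \<Rightarrow> real \<Rightarrow> real \<Rightarrow> real \<Rightarrow> real" where
  "eta M Ts Lsr g = ln ((1 - eps M Ts Lsr g) * (real M - 1) / eps M Ts Lsr g)"

definition SER_a1 :: "real \<Rightarrow> real \<Rightarrow> real" where
  "SER_a1 G g = sqrt pi * (2 * G) powr (-1/4) / (4 * g) * (G / 2 + 1 / g) powr (-3/4)"

definition SER_b1 :: "real \<Rightarrow> real \<Rightarrow> real" where
  "SER_b1 G g = 1/4 + sqrt (G / 2 + 1 / g) / (2 * sqrt (2 * G))"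

definition SER_a2 :: "real \<Rightarrow> real \<Rightarrow> real \<Rightarrow> real \<Rightarrow> real" where
  "SER_a2 \<delta> G R g = 2 * g / (\<delta> * R * (G * g + 2) * g^2)"

definition SER_b2 :: "real \<Rightarrow> real \<Rightarrow> real \<Rightarrow> real" where
  "SER_b2 \<delta> R g = \<delta> * R * g^2 / (2 * g)"

definition SER :: "nat \<Rightarrow> real \<Rightarrow> real \<Rightarrow> real \<Rightarrow> real \<Rightarrow> real \<Rightarrow> real \<Rightarrow> real \<Rightarrow> real" where
  "SER M Ts Lsd Lsr Lrd \<delta> \<alpha> g =
    (let G = gsd M Ts Lsd; R = grd M Ts Lsr Lrd;
         \<epsilon> = eps M Ts Lsr g; \<eta> = eta M Ts Lsr g;
         Z1 = SER_a1 G g * sqrt (2 * \<eta>) * exp (- 2 * SER_b1 G g * \<eta>);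
         Z2 = SER_a2 \<delta> G R g * (1 - \<alpha>) / (2 * \<alpha>) *
                ln (1 + SER_b2 \<delta> R g * (2 * \<alpha> / (1 - \<alpha>)));
         Z3 = exp \<eta> * Z1;
         PC = (1 - \<epsilon>) * (Z1 + Z2);
         PE = \<epsilon> * Z3 / (real M - 1) + \<epsilon> / (G * g + 2)
     in PC + PE)"

end

theory Submission
  imports Defs "HOL-Real_Asymp.Real_Asymp"
begin

text \<open>The quantity \<open>\<epsilon>\<close> is of exact order \<open>1/\<gamma>\<close> (for \<open>M > 2\<close> because
  \<open>1 - sqrt (x / (1 + x))\<close> lies between \<open>1 / (2 (1 + x))\<close> and \<open>1 / (1 + x)\<close>). Hence
  \<open>\<eta> = ln ((1 - \<epsilon>) (M - 1) / \<epsilon>)\<close> grows like \<open>ln \<gamma>\<close> while \<open>exp (-\<eta>) \<le> 2 \<epsilon>\<close>; as \<open>b\<^sub>1 \<ge> 1/2\<close>,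
  both \<open>Z\<^sub>1\<close> and \<open>\<epsilon> Z\<^sub>3\<close> are at most a constant times \<open>a\<^sub>1 (1 + 2 \<eta>) \<epsilon> = O(ln \<gamma> / \<gamma>\<^sup>2)\<close>,
  and so is \<open>Z\<^sub>2\<close>. The last term \<open>\<epsilon> / (g\<^sub>s\<^sub>d \<gamma> + 2)\<close> alone is of order \<open>1/\<gamma>\<^sup>2\<close>, so the
  error probability is squeezed between \<open>c/\<gamma>\<^sup>2\<close> and \<open>K ln \<gamma> / \<gamma>\<^sup>2\<close>, which forces
  \<open>ln (P\<^sub>C + P\<^sub>E) / ln \<gamma> \<rightarrow> -2\<close>.\<close>

lemma ln_over_ln_tendsto_of_bigo_bigomega:
  fixes f :: "real \<Rightarrow> real" and d :: real
  assumes pos: "eventually (\<lambda>x. 0 < f x) at_top"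
    and upper: "f \<in> O(\<lambda>x. ln x * x powr -d)"
    and lower: "f \<in> \<Omega>(\<lambda>x. x powr -d)"
  shows "((\<lambda>x. ln (f x) / ln x) \<longlongrightarrow> -d) at_top"
proof -
  obtain K where K: "0 < K" "eventually (\<lambda>x. norm (f x) \<le> K * norm (ln x * x powr -d)) at_top"
    using upper by (rule landau_o.bigE)
  obtain c where c: "0 < c" "eventually (\<lambda>x. c * norm (x powr -d) \<le> norm (f x)) at_top"
    using lower by (rule landau_omega.bigE)
  show ?thesis
  proof (rule real_tendsto_sandwich)
    show "eventually (\<lambda>x. (ln c - d * ln x) / ln x \<le> ln (f x) / ln x) at_top"
      using pos c(2) eventually_gt_at_top[of 1]
    proof eventually_elim
      case (elim x)
      have "ln c - d * ln x = ln (c * x powr -d)"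
        using c(1) elim(3) by (simp add: ln_mult)
      also have "\<dots> \<le> ln (f x)"
        using c(1) elim by simp
      finally show ?case
        using elim(3) by (simp add: divide_right_mono)
    qed
    show "eventually (\<lambda>x. ln (f x) / ln x \<le> (ln K + ln (ln x) - d * ln x) / ln x) at_top"
      using pos K(2) eventually_gt_at_top[of 1]
    proof eventually_elim
      case (elim x)
      have "ln (f x) \<le> ln (K * (ln x * x powr -d))"
        using K(1) elim by simp
      also have "\<dots> = ln K + ln (ln x) - d * ln x"
        using K(1) elim(3) by (simp add: ln_mult)
      finally show ?case
        using elim(3) by (simp add: divide_right_mono)
    qed
  qed real_asymp+
qed

lemma one_minus_sqrt_div_one_plus:
  fixes x :: real
  assumes "0 \<le> x"
  shows "1 - sqrt (x / (1 + x)) = 1 / ((1 + x) * (1 + sqrt (x / (1 + x))))"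
proof -
  define s where "s = sqrt (x / (1 + x))"
  have "0 \<le> s" "s\<^sup>2 = x / (1 + x)"
    using assms by (simp_all add: s_def)
  then have "(1 - s) * ((1 + x) * (1 + s)) = 1"
    using assms by (simp add: power2_eq_square field_simps)
  then show ?thesis
    using assms \<open>0 \<le> s\<close> by (simp add: s_def[symmetric] eq_divide_eq)
qed

lemma eps_bounds:
  assumes M: "M \<ge> 2" and "Ts > 0" and "Lsr > 0"
  obtains Q k where "0 < Q" "0 < k"
    and "\<And>g. 0 \<le> g \<Longrightarrow>
           Q / 2 / (1 + k * g) \<le> eps M Ts Lsr g \<and> eps M Ts Lsr g \<le> Q / (1 + k * g)"
proof (cases "M = 2")
  case True
  have "1 / 2 / (1 + Ts * Lsr * g) \<le> eps M Ts Lsr g \<and> eps M Ts Lsr g \<le> 1 / (1 + Ts * Lsr * g)"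
    if "0 \<le> g" for g
  proof -
    have "0 \<le> Ts * Lsr * g"
      using assms that by simp
    then show ?thesis
      using True by (simp add: eps_def gID_def field_simps)
  qed
  then show ?thesis
    using assms by (intro that[of 1 "Ts * Lsr"]) simp_all
next
  case False
  define c where "c = cos (pi / real M)"
  have angle: "0 < pi / real M" "pi / real M < pi / 2" "pi / real M \<le> pi"
    using M False by (auto simp: field_simps)
  have c: "0 < c" "c < 1"
    unfolding c_def using angle cos_monotone_0_pi[of 0 "pi / real M"]
    by (simp_all add: cos_gt_zero_pi)
  define Q where "Q = 1.03 * sqrt ((1 + c) / (2 * c))"
  define k where "k = (1 - c) * Ts * Lsr"
  have Qk: "0 < Q" "0 < k"
    using c assms by (simp_all add: Q_def k_def)
  have "Q / 2 / (1 + k * g) \<le> eps M Ts Lsr g \<and> eps M Ts Lsr g \<le> Q / (1 + k * g)"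
    if "0 \<le> g" for g
  proof -
    define x where "x = k * g"
    define s where "s = sqrt (x / (1 + x))"
    have x: "0 \<le> x"
      using Qk that by (simp add: x_def)
    then have s: "0 \<le> s" "s \<le> 1"
      by (simp_all add: s_def)
    have "eps M Ts Lsr g = Q / ((1 + x) * (1 + s))"
      using False one_minus_sqrt_div_one_plus[OF x]
      by (simp add: eps_def Q_def c_def[symmetric] gID_def x_def k_def s_def mult.assoc)
    moreover have "Q / ((1 + x) * 2) \<le> Q / ((1 + x) * (1 + s))"
      and "Q / ((1 + x) * (1 + s)) \<le> Q / ((1 + x) * 1)"
      using Qk x s by (intro divide_left_mono mult_left_mono; simp)+
    ultimately show ?thesis
      by (simp add: x_def mult.commute)
  qed
  with Qk show ?thesis
    by (rule that)
qed

lemma eps_inverse_bounds: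
  assumes "M \<ge> 2" and "Ts > 0" and "Lsr > 0"
  obtains A B where "0 < A" "0 < B"
    and "\<And>g. 1 \<le> g \<Longrightarrow> B / g \<le> eps M Ts Lsr g \<and> eps M Ts Lsr g \<le> A / g"
proof -
  obtain Q k where Qk: "0 < Q" "0 < k"
    and bounds: "\<And>g. 0 \<le> g \<Longrightarrow>
      Q / 2 / (1 + k * g) \<le> eps M Ts Lsr g \<and> eps M Ts Lsr g \<le> Q / (1 + k * g)"
    using eps_bounds[OF assms] by blast
  show ?thesis
  proof (rule that[of "Q / k" "Q / 2 / (1 + k)"])
    fix g :: real
    assume g: "1 \<le> g"
    have "1 + k * g \<le> (1 + k) * g" and "k * g \<le> 1 + k * g"
      using g by (simp_all add: algebra_simps)
    then have "Q / 2 / ((1 + k) * g) \<le> Q / 2 / (1 + k * g)" and "Q / (1 + k * g) \<le> Q / (k * g)"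
      using Qk g by (intro divide_left_mono mult_pos_pos add_pos_pos; simp)+
    then have "Q / 2 / (1 + k) / g \<le> Q / 2 / (1 + k * g)" and "Q / (1 + k * g) \<le> Q / k / g"
      by (simp_all add: divide_divide_eq_left algebra_simps)
    then show "Q / 2 / (1 + k) / g \<le> eps M Ts Lsr g \<and> eps M Ts Lsr g \<le> Q / k / g"
      using bounds[of g] g by linarith
  qed (use Qk in auto)
qed

lemma ln_odds_bounds:
  fixes e m :: real
  assumes e: "0 < e" "e \<le> 1 / 2" and m: "1 \<le> m"
  shows "0 \<le> ln ((1 - e) * m / e)" and "ln ((1 - e) * m / e) \<le> ln (m / e)"
    and "exp (- ln ((1 - e) * m / e)) \<le> 2 * e"
proof -
  have half: "1 / 2 \<le> (1 - e) * m"
    using mult_mono[of "1 / 2" "1 - e" 1 m] e m by simp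
  then show "0 \<le> ln ((1 - e) * m / e)"
    using e by (simp add: le_divide_eq)
  show "ln ((1 - e) * m / e) \<le> ln (m / e)"
    using e m half by (simp add: divide_right_mono mult_left_le_one_le)
  have "exp (- ln ((1 - e) * m / e)) = e / ((1 - e) * m)"
    using e half by (simp add: exp_minus)
  also have "\<dots> \<le> 2 * e"
    using e half by (simp add: divide_le_eq)
  finally show "exp (- ln ((1 - e) * m / e)) \<le> 2 * e" .
qed

lemma sqrt_le_one_plus:
  fixes x :: real
  assumes "0 \<le> x"
  shows "sqrt x \<le> 1 + x"
proof -
  have "x \<le> (1 + x)\<^sup>2"
    using assms by (simp add: power2_eq_square algebra_simps)
  then have "sqrt x \<le> sqrt ((1 + x)\<^sup>2)"
    by (rule real_sqrt_le_mono)
  then show ?thesis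
    using assms by simp
qed

text \<open>With \<open>a = a\<^sub>1\<close>, \<open>b = b\<^sub>1\<close> and \<open>m = M - 1\<close> the left-hand side is
  \<open>(1 - \<epsilon>) Z\<^sub>1 + \<epsilon> Z\<^sub>3 / (M - 1)\<close>.\<close>

lemma direct_terms_le:
  fixes a b e m :: real
  assumes a: "0 \<le> a" and b: "1 / 2 \<le> b" and e: "0 < e" "e \<le> 1 / 2" and m: "1 \<le> m"
  defines "\<eta> \<equiv> ln ((1 - e) * m / e)"
  shows "(1 - e) * (a * sqrt (2 * \<eta>) * exp (- 2 * b * \<eta>))
           + e * (exp \<eta> * (a * sqrt (2 * \<eta>) * exp (- 2 * b * \<eta>))) / m
         \<le> 3 * a * (1 + 2 * \<eta>) * e"
proof -
  have \<eta>: "0 \<le> \<eta>" "exp (- \<eta>) \<le> 2 * e"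
    using ln_odds_bounds[OF e m] by (simp_all add: \<eta>_def)
  define Z where "Z = a * sqrt (2 * \<eta>) * exp (- 2 * b * \<eta>)"
  have Z0: "0 \<le> Z"
    using a \<eta> by (simp add: Z_def)
  have "exp (- 2 * b * \<eta>) \<le> exp (- \<eta>)"
    using mult_right_mono[OF b \<eta>(1)] by simp
  with \<eta>(2) have decay: "exp (- 2 * b * \<eta>) \<le> 2 * e"
    by linarith
  have root: "sqrt (2 * \<eta>) \<le> 1 + 2 * \<eta>"
    using \<eta> by (simp add: sqrt_le_one_plus)
  have Z1: "Z \<le> a * (1 + 2 * \<eta>) * (2 * e)"
    unfolding Z_def using a \<eta> decay root by (intro mult_mono) auto
  have "exp \<eta> * Z \<le> a * (1 + 2 * \<eta>)"
  proof -
    have "exp \<eta> * exp (- 2 * b * \<eta>) \<le> 1"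
      using mult_right_mono[OF b \<eta>(1)] by (simp flip: exp_add)
    then have "a * sqrt (2 * \<eta>) * (exp \<eta> * exp (- 2 * b * \<eta>)) \<le> a * sqrt (2 * \<eta>)"
      using a \<eta> by (intro mult_left_le) auto
    then have "exp \<eta> * Z \<le> a * sqrt (2 * \<eta>)"
      by (simp add: Z_def mult_ac)
    with root a show ?thesis
      by (meson mult_left_mono order_trans)
  qed
  then have Z3: "e * (exp \<eta> * Z) \<le> e * (a * (1 + 2 * \<eta>))"
    using e by (intro mult_left_mono) auto
  have "(1 - e) * Z \<le> Z"
    using e Z0 by (simp add: mult_left_le_one_le)
  moreover have "e * (exp \<eta> * Z) / m \<le> e * (exp \<eta> * Z) / 1"
    using e m Z0 by (intro divide_left_mono) auto
  moreover have "a * (1 + 2 * \<eta>) * (2 * e) + e * (a * (1 + 2 * \<eta>)) = 3 * a * (1 + 2 * \<eta>) * e"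
    by (simp add: algebra_simps)
  ultimately show ?thesis
    using Z1 Z3 unfolding Z_def[symmetric] by linarith
qed

lemma SER_b1_ge_half:
  assumes "0 < G" "0 < g"
  shows "1 / 2 \<le> SER_b1 G g"
proof -
  define s t where "s = sqrt (G / 2 + 1 / g)" and "t = sqrt (2 * G)"
  have "t = sqrt 4 * sqrt (G / 2)"
    unfolding t_def real_sqrt_mult[symmetric] by simp
  also have "\<dots> \<le> 2 * s"
    using assms by (simp add: s_def real_sqrt_four)
  finally have "t \<le> 2 * s" .
  moreover have "0 < t"
    using assms by (simp add: t_def)
  ultimately have "1 / 4 \<le> s / (2 * t)"
    by (simp add: field_simps)
  then show ?thesis
    by (simp add: SER_b1_def s_def t_def)
qed

definition relay_term :: "real \<Rightarrow> real \<Rightarrow> real \<Rightarrow> real \<Rightarrow> real \<Rightarrow> real" where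
  "relay_term \<delta> G R \<alpha> g =
     SER_a2 \<delta> G R g * (1 - \<alpha>) / (2 * \<alpha>) * ln (1 + SER_b2 \<delta> R g * (2 * \<alpha> / (1 - \<alpha>)))"

lemma relay_term_nonneg:
  assumes "0 < \<delta>" "0 < G" "0 < R" "0 < \<alpha>" "\<alpha> < 1" "0 < g"
  shows "0 \<le> relay_term \<delta> G R \<alpha> g"
  using assms by (simp add: relay_term_def SER_a2_def SER_b2_def)

definition SER_majorant :: "real \<Rightarrow> real \<Rightarrow> real \<Rightarrow> real \<Rightarrow> real \<Rightarrow> real \<Rightarrow> real \<Rightarrow> real \<Rightarrow> real" where
  "SER_majorant \<delta> G R \<alpha> m A B g =
     3 * SER_a1 G g * (1 + 2 * ln (m * g / B)) * (A / g) + relay_term \<delta> G R \<alpha> g + A / g / (G * g + 2)"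

lemma gains_pos:
  assumes "M \<ge> 2" "0 < Ts" "0 < Lsd" "0 < Lsr" "0 < Lrd"
  shows "0 < gsd M Ts Lsd" and "0 < grd M Ts Lsr Lrd"
  using assms sin_pi_divide_n_gt_0[of M] by (simp_all add: gsd_def grd_def)

lemma SER_bounds:
  fixes M :: nat and Ts Lsd Lsr Lrd \<delta> \<alpha> A B g :: real
  defines "G \<equiv> gsd M Ts Lsd" and "R \<equiv> grd M Ts Lsr Lrd" and "e \<equiv> eps M Ts Lsr g"
  assumes M: "M \<ge> 2" and gains: "0 < G" "0 < R"
    and \<delta>: "0 < \<delta>" and \<alpha>: "0 < \<alpha>" "\<alpha> < 1" and B: "0 < B"
    and g: "1 \<le> g" and e: "B / g \<le> e" "e \<le> A / g" "A / g \<le> 1 / 2"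
  shows "B / g / (G * g + 2) \<le> SER M Ts Lsd Lsr Lrd \<delta> \<alpha> g"
    and "SER M Ts Lsd Lsr Lrd \<delta> \<alpha> g \<le> SER_majorant \<delta> G R \<alpha> (real M - 1) A B g"
proof -
  define m where "m = real M - 1"
  define \<eta> where "\<eta> = ln ((1 - e) * m / e)"
  define Z1 where "Z1 = SER_a1 G g * sqrt (2 * \<eta>) * exp (- 2 * SER_b1 G g * \<eta>)"
  define Z2 where "Z2 = relay_term \<delta> G R \<alpha> g"
  have SER: "SER M Ts Lsd Lsr Lrd \<delta> \<alpha> g =
      (1 - e) * (Z1 + Z2) + e * (exp \<eta> * Z1) / m + e / (G * g + 2)"
    by (simp add: SER_def Let_def G_def R_def e_def m_def \<eta>_def eta_def Z1_def Z2_def relay_term_def)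
  have m: "1 \<le> m"
    using M by (simp add: m_def)
  have Bg: "0 < B / g"
    using B g by simp
  then have e0: "0 < e" "e \<le> 1 / 2"
    using e by linarith+
  have Gg: "0 < G * g + 2"
    using gains g by (intro add_nonneg_pos) auto
  have a1: "0 \<le> SER_a1 G g"
    using gains g by (simp add: SER_a1_def)
  have \<eta>: "0 \<le> \<eta>" "\<eta> \<le> ln (m / e)"
    using ln_odds_bounds[OF e0 m] by (simp_all add: \<eta>_def)
  have Z: "0 \<le> Z1" "0 \<le> Z2"
    using a1 \<eta> relay_term_nonneg[OF \<delta> gains \<alpha>] g by (simp_all add: Z1_def Z2_def)
  have direct: "(1 - e) * Z1 + e * (exp \<eta> * Z1) / m \<le> 3 * SER_a1 G g * (1 + 2 * \<eta>) * e"
    unfolding Z1_def \<eta>_def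
    using direct_terms_le[OF a1 SER_b1_ge_half e0 m] gains g by simp
  have "m / e \<le> m / (B / g)"
    using Bg e e0 m by (intro divide_left_mono mult_pos_pos) auto
  then have "ln (m / e) \<le> ln (m * g / B)"
    using e0 m by (intro ln_mono) auto
  with \<eta>(2) have "\<eta> \<le> ln (m * g / B)"
    by linarith
  then have "3 * SER_a1 G g * (1 + 2 * \<eta>) * e \<le> 3 * SER_a1 G g * (1 + 2 * ln (m * g / B)) * (A / g)"
    using a1 \<eta> e e0 by (intro mult_mono) auto
  moreover have "(1 - e) * Z2 \<le> Z2"
    using e0 Z by (simp add: mult_left_le_one_le)
  moreover have "e / (G * g + 2) \<le> A / g / (G * g + 2)"
    using e Gg by (intro divide_right_mono) auto
  ultimately show "SER M Ts Lsd Lsr Lrd \<delta> \<alpha> g \<le> SER_majorant \<delta> G R \<alpha> (real M - 1) A B g"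
    using SER direct by (simp add: SER_majorant_def m_def Z2_def distrib_left)
  have "B / g / (G * g + 2) \<le> e / (G * g + 2)"
    using e Gg by (intro divide_right_mono) auto
  also have "\<dots> \<le> SER M Ts Lsd Lsr Lrd \<delta> \<alpha> g"
    using SER Z e0 m by simp
  finally show "B / g / (G * g + 2) \<le> SER M Ts Lsd Lsr Lrd \<delta> \<alpha> g" .
qed

lemma SER_eventually_bounds:
  fixes M :: nat and Ts Lsd Lsr Lrd \<delta> \<alpha> :: real
  defines "G \<equiv> gsd M Ts Lsd" and "R \<equiv> grd M Ts Lsr Lrd"
  assumes M: "M \<ge> 2" and pos: "Ts > 0" "Lsd > 0" "Lsr > 0" "Lrd > 0"
    and \<delta>: "0 < \<delta>" and \<alpha>: "0 < \<alpha>" "\<alpha> < 1"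
  obtains A B where "0 < A" "0 < B"
    and "eventually (\<lambda>g. B / g / (G * g + 2) \<le> SER M Ts Lsd Lsr Lrd \<delta> \<alpha> g \<and>
           SER M Ts Lsd Lsr Lrd \<delta> \<alpha> g \<le> SER_majorant \<delta> G R \<alpha> (real M - 1) A B g) at_top"
proof -
  obtain A B where AB: "0 < A" "0 < B"
    and eps: "\<And>g. 1 \<le> g \<Longrightarrow> B / g \<le> eps M Ts Lsr g \<and> eps M Ts Lsr g \<le> A / g"
    using eps_inverse_bounds[OF M pos(1,3)] by blast
  have gains: "0 < G" "0 < R"
    using gains_pos[OF M pos] by (simp_all add: G_def R_def)
  show ?thesis
  proof (rule that[OF AB])
    show "eventually (\<lambda>g. B / g / (G * g + 2) \<le> SER M Ts Lsd Lsr Lrd \<delta> \<alpha> g \<and>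
            SER M Ts Lsd Lsr Lrd \<delta> \<alpha> g \<le> SER_majorant \<delta> G R \<alpha> (real M - 1) A B g) at_top"
      using eventually_ge_at_top[of "max 1 (2 * A)"]
    proof eventually_elim
      case (elim g)
      then have g: "1 \<le> g" "A / g \<le> 1 / 2"
        by (auto simp: field_simps)
      with eps have "B / g \<le> eps M Ts Lsr g" "eps M Ts Lsr g \<le> A / g"
        by auto
      from SER_bounds[OF M gains[unfolded G_def R_def] \<delta> \<alpha> AB(2) g(1) this g(2)] show ?case
        by (simp add: G_def R_def)
    qed
  qed
qed

theorem mainTheorem4:
  fixes M :: nat and Ts Lsd Lsr Lrd \<delta> \<alpha> :: real
  assumes "M \<ge> 2"
    and "Ts > 0" and "Lsd > 0" and "Lsr > 0" and "Lrd > 0"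
    and "0 < \<delta>" and "\<delta> \<le> 1"
    and "0 < \<alpha>" and "\<alpha> < 1"
  shows "((\<lambda>g. ln (SER M Ts Lsd Lsr Lrd \<delta> \<alpha> g) / ln g) \<longlongrightarrow> -2) at_top"
proof -
  define G R where "G = gsd M Ts Lsd" and "R = grd M Ts Lsr Lrd"
  have gains: "0 < G" "0 < R" "0 < real M - 1"
    using gains_pos[OF assms(1-5)] assms(1) by (simp_all add: G_def R_def)
  obtain A B where AB: "0 < A" "0 < B"
    and bounds: "eventually (\<lambda>g. B / g / (G * g + 2) \<le> SER M Ts Lsd Lsr Lrd \<delta> \<alpha> g \<and>
           SER M Ts Lsd Lsr Lrd \<delta> \<alpha> g \<le> SER_majorant \<delta> G R \<alpha> (real M - 1) A B g) at_top"
    using SER_eventually_bounds[OF assms(1-6,8,9), folded G_def R_def] by blast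
  define lower where "lower g = B / g / (G * g + 2)" for g
  let ?upper = "SER_majorant \<delta> G R \<alpha> (real M - 1) A B"
  have "lower \<in> \<Omega>(\<lambda>g. g powr -2)" and "?upper \<in> O(\<lambda>g. ln g * g powr -2)"
    using AB gains assms(6,8,9)
    unfolding lower_def SER_majorant_def relay_term_def SER_a1_def SER_a2_def SER_b2_def
    by real_asymp+
  moreover have "eventually (\<lambda>g. 0 < lower g \<and> lower g \<le> SER M Ts Lsd Lsr Lrd \<delta> \<alpha> g
                               \<and> SER M Ts Lsd Lsr Lrd \<delta> \<alpha> g \<le> ?upper g) at_top"
    using bounds eventually_gt_at_top[of 0]
    by eventually_elim (use AB gains in \<open>simp add: lower_def add_nonneg_pos\<close>)
  then have "SER M Ts Lsd Lsr Lrd \<delta> \<alpha> \<in> \<Omega>(lower)"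
    and "SER M Ts Lsd Lsr Lrd \<delta> \<alpha> \<in> O(?upper)"
    and "eventually (\<lambda>g. 0 < SER M Ts Lsd Lsr Lrd \<delta> \<alpha> g) at_top"
    by (auto intro!: landau_omega.big_mono landau_o.big_mono elim!: eventually_mono)
  ultimately show ?thesis
    by (intro ln_over_ln_tendsto_of_bigo_bigomega) (auto elim: landau_o.big_trans landau_omega.big_trans)
qed

end
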